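(* Let $H:[0,T]\times\mathbb{R}^N\times\mathbb{R}^N\to\mathbb{R}$, and suppose there are functions $f:[0,T]\times\mathbb{R}^N\times\mathbb{B}\to\mathbb{R}^N$, $l:[0,T]\times\mathbb{R}^N\times\mathbb{B}\to\mathbb{R}$, with $\mathbb{B}$ the closed unit ball of $\mathbb{R}^{N+1}$, such that $H(t,x,p)=\sup_{a\in\mathbb{B}}\{\langle p,f(t,x,a)\rangle-l(t,x,a)\}$ for all $t,x,p$ and (R1) $f$ and $l$ are continuous; (R2) for every $R\geq0$ there is an integrable $K_R:[0,T]\to[0,\infty)$ with $|f(t,x,a)-f(t,y,a)|+|l(t,x,a)-l(t,y,a)|\leq K_R(t)|x-y|$ for all $x,y\in\mathbb{B}_R$, $a\in\mathbb{B}$ and a.e. $t$; (R3) there is an integrable $C:[0,T]\to[0,\infty)$ with $|f(t,x,a)|+|l(t,x,a)|\leq C(t)(1+|x|)$ for all $x$, $a\in\mathbb{B}$ and a.e. $t$. Then $H$ satisfies condition (A) (see context).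
   Context: $\mathbb{B}_R$ is the closed ball of radius $R$ centered at $0$; $\|W\|:=\sup_{\xi\in W}|\xi|$; $H^*(t,x,v)=\sup_p\{\langle v,p\rangle-H(t,x,p)\}$ and $\mathrm{dom}\,H^*(t,x,\cdot)=\{v:H^*(t,x,v)\neq\pm\infty\}$. Conditions: (H1) $H$ continuous in all variables. (H2) $H(t,x,\cdot)$ convex. (H3) for every $R\geq0$ there is $C_R\geq0$ with $|H(t,x,p)-H(t,x,q)|\leq C_R|p-q|$ for $t\in[0,T]$, $x\in\mathbb{B}_R$, all $p,q$. (H4) there is an integrable $c\geq0$ with $|H(t,x,p)-H(t,x,q)|\leq c(t)(1+|x|)|p-q|$ for a.e. $t$, all $x,p,q$. (H5) for every $R\geq0$ there is an integrable $k_R\geq0$ with $|H(t,x,p)-H(t,y,p)|\leq k_R(t)(1+|p|)|x-y|$ for $x,y\in\mathbb{B}_R$, all $p$, a.e. $t$. Condition (A): $H$ satisfies (H1)–(H5) and there is a continuous $\lambda:[0,T]\times\mathbb{R}^N\to[0,\infty)$ with $\|\mathrm{dom}\,H^*(t,x,\cdot)\|\leq\lambda(t,x)$ and $\|H^*(t,x,\mathrm{dom}\,H^*(t,x,\cdot))\|\leq\lambda(t,x)$ for all $t,x$; for every $R\geq0$ there is an integrable $\zeta_R\geq0$ such that $\lambda(t,\cdot)$ is $\zeta_R(t)$-Lipschitz on $\mathbb{B}_R$ for a.e. $t$; and there is an integrable $\vartheta\geq0$ with $\lambda(t,x)\leq\vartheta(t)(1+|x|)$ for all $x$ and a.e. $t$.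 *)

theory Defs
  imports "HOL-Analysis.Analysis"
begin

text \<open>Hamiltonians H :: real => 'a => 'a => real on [0,T] x R^N x R^N, with R^N
  rendered as an arbitrary Euclidean space 'a.  "Integrable" means Lebesgue integrable
  on [0,T]; "a.e. t" means almost everywhere w.r.t. Lebesgue measure on [0,T].\<close>

definition integrable_nonneg :: "real \<Rightarrow> (real \<Rightarrow> real) \<Rightarrow> bool" where
  "integrable_nonneg T c \<longleftrightarrow> (\<forall>t\<in>{0..T}. 0 \<le> c t) \<and> integrable (lebesgue_on {0..T}) c"

definition H1 :: "real \<Rightarrow> (real \<Rightarrow> 'a::euclidean_space \<Rightarrow> 'a \<Rightarrow> real) \<Rightarrow> bool" where
  "H1 T H \<longleftrightarrow> continuous_on ({0..T} \<times> UNIV \<times> UNIV) (\<lambda>(t,x,p). H t x p)"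

definition H2 :: "real \<Rightarrow> (real \<Rightarrow> 'a::euclidean_space \<Rightarrow> 'a \<Rightarrow> real) \<Rightarrow> bool" where
  "H2 T H \<longleftrightarrow> (\<forall>t\<in>{0..T}. \<forall>x. convex_on UNIV (H t x))"

definition H3 :: "real \<Rightarrow> (real \<Rightarrow> 'a::euclidean_space \<Rightarrow> 'a \<Rightarrow> real) \<Rightarrow> bool" where
  "H3 T H \<longleftrightarrow> (\<forall>R\<ge>0. \<exists>C\<ge>0. \<forall>t\<in>{0..T}. \<forall>x\<in>cball 0 R. \<forall>p q.
      \<bar>H t x p - H t x q\<bar> \<le> C * norm (p - q))"

definition H4 :: "real \<Rightarrow> (real \<Rightarrow> 'a::euclidean_space \<Rightarrow> 'a \<Rightarrow> real) \<Rightarrow> bool" where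
  "H4 T H \<longleftrightarrow> (\<exists>c. integrable_nonneg T c \<and>
      (AE t in lebesgue_on {0..T}. \<forall>x p q.
         \<bar>H t x p - H t x q\<bar> \<le> c t * (1 + norm x) * norm (p - q)))"

definition H5 :: "real \<Rightarrow> (real \<Rightarrow> 'a::euclidean_space \<Rightarrow> 'a \<Rightarrow> real) \<Rightarrow> bool" where
  "H5 T H \<longleftrightarrow> (\<forall>R\<ge>0. \<exists>k. integrable_nonneg T k \<and>
      (AE t in lebesgue_on {0..T}. \<forall>x\<in>cball 0 R. \<forall>y\<in>cball 0 R. \<forall>p.
         \<bar>H t x p - H t y p\<bar> \<le> k t * (1 + norm p) * norm (x - y)))"

definition Hstar :: "(real \<Rightarrow> 'a::euclidean_space \<Rightarrow> 'a \<Rightarrow> real) \<Rightarrow> real \<Rightarrow> 'a \<Rightarrow> 'a \<Rightarrow> ereal" where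
  "Hstar H t x v = (SUP p. ereal (inner v p - H t x p))"

definition domHstar :: "(real \<Rightarrow> 'a::euclidean_space \<Rightarrow> 'a \<Rightarrow> real) \<Rightarrow> real \<Rightarrow> 'a \<Rightarrow> 'a set" where
  "domHstar H t x = {v. Hstar H t x v \<noteq> \<infinity> \<and> Hstar H t x v \<noteq> -\<infinity>}"

definition setnorm :: "'b::real_normed_vector set \<Rightarrow> ereal" where
  "setnorm W = (SUP \<xi>\<in>W. ereal (norm \<xi>))"

definition ereal_setnorm :: "ereal set \<Rightarrow> ereal" where
  "ereal_setnorm W = (SUP \<xi>\<in>W. \<bar>\<xi>\<bar>)"

definition condition_A :: "real \<Rightarrow> (real \<Rightarrow> 'a::euclidean_space \<Rightarrow> 'a \<Rightarrow> real) \<Rightarrow> bool" where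
  "condition_A T H \<longleftrightarrow> H1 T H \<and> H2 T H \<and> H3 T H \<and> H4 T H \<and> H5 T H \<and>
    (\<exists>lam :: real \<Rightarrow> 'a \<Rightarrow> real.
       continuous_on ({0..T} \<times> UNIV) (\<lambda>(t,x). lam t x) \<and>
       (\<forall>t\<in>{0..T}. \<forall>x. 0 \<le> lam t x) \<and>
       (\<forall>t\<in>{0..T}. \<forall>x. setnorm (domHstar H t x) \<le> ereal (lam t x)) \<and>
       (\<forall>t\<in>{0..T}. \<forall>x. ereal_setnorm (Hstar H t x ` domHstar H t x) \<le> ereal (lam t x)) \<and>
       (\<forall>R\<ge>0. \<exists>\<zeta>. integrable_nonneg T \<zeta> \<and>
          (AE t in lebesgue_on {0..T}. lipschitz_on (\<zeta> t) (cball 0 R) (lam t))) \<and>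
       (\<exists>\<theta>. integrable_nonneg T \<theta> \<and>
          (AE t in lebesgue_on {0..T}. \<forall>x. lam t x \<le> \<theta> t * (1 + norm x))))"

end

(* For each t and x, H(t,x,-) is the supremum over the compact control ball B of the affine
   functions p \<mapsto> <p, f(t,x,a)> - l(t,x,a); hence it is convex, continuous (a supremum of a
   jointly continuous family over a compact set), and Lipschitz in p with constant
   lam(t,x) = max_a |f(t,x,a)| + |l(t,x,a)|.  The bounds (R2) and (R3) on f and l pass through
   the supremum to H and to lam.  By strict separation, dom H* lies in the convex hull of
   f(t,x,B), hence in the ball of radius lam(t,x), and on that hull
   -lam(t,x) \<le> -H(t,x,0) \<le> H* \<le> lam(t,x). *)

theory Submission
  imports Defs
begin

lemma cSUP_abs_diff_le:
  fixes u w :: "'c \<Rightarrow> real"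
  assumes "K \<noteq> {}" and bdd_u: "bdd_above (u ` K)" and bdd_w: "bdd_above (w ` K)"
    and diff: "\<And>a. a \<in> K \<Longrightarrow> \<bar>u a - w a\<bar> \<le> e"
  shows "\<bar>(SUP a\<in>K. u a) - (SUP a\<in>K. w a)\<bar> \<le> e"
proof -
  have "(SUP a\<in>K. u a) \<le> (SUP a\<in>K. w a) + e"
  proof (rule cSUP_least[OF \<open>K \<noteq> {}\<close>])
    fix a assume "a \<in> K"
    with cSUP_upper[OF this bdd_w] diff show "u a \<le> (SUP a\<in>K. w a) + e" by force
  qed
  moreover have "(SUP a\<in>K. w a) \<le> (SUP a\<in>K. u a) + e"
  proof (rule cSUP_least[OF \<open>K \<noteq> {}\<close>])
    fix a assume "a \<in> K"
    with cSUP_upper[OF this bdd_u] diff show "w a \<le> (SUP a\<in>K. u a) + e" by force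
  qed
  ultimately show ?thesis by linarith
qed

lemma continuous_on_SUP_compact:
  fixes g :: "'b::heine_borel \<Rightarrow> 'c::metric_space \<Rightarrow> real"
  assumes "closed S" "compact K" "K \<noteq> {}"
    and g: "continuous_on (S \<times> K) (\<lambda>(s,a). g s a)"
  shows "continuous_on S (\<lambda>s. SUP a\<in>K. g s a)"
  unfolding continuous_on_iff
proof (intro ballI allI impI)
  fix s\<^sub>0 and e :: real assume s\<^sub>0: "s\<^sub>0 \<in> S" and "0 < e"
  have bdd: "bdd_above (g s ` K)" if "s \<in> S" for s
  proof -
    have "continuous_on K (\<lambda>a. (\<lambda>(s,a). g s a) (s,a))"
      by (rule continuous_on_compose2[OF g]) (use that in \<open>auto intro!: continuous_intros\<close>)
    then have "continuous_on K (g s)" by simp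
    then show ?thesis
      by (meson \<open>compact K\<close> bounded_imp_bdd_above compact_continuous_image compact_imp_bounded)
  qed
  let ?C = "(S \<inter> cball s\<^sub>0 1) \<times> K"
  have "compact ?C" using assms by (intro compact_Times closed_Int_compact) auto
  moreover have "continuous_on ?C (\<lambda>(s,a). g s a)" using g by (rule continuous_on_subset) auto
  ultimately have "uniformly_continuous_on ?C (\<lambda>(s,a). g s a)"
    using compact_uniformly_continuous by blast
  then obtain d where "d > 0" and d: "\<And>z z'. z \<in> ?C \<Longrightarrow> z' \<in> ?C \<Longrightarrow> dist z' z < d \<Longrightarrow>
      dist ((\<lambda>(s,a). g s a) z') ((\<lambda>(s,a). g s a) z) < e/2"
    using \<open>0 < e\<close> unfolding uniformly_continuous_on_def by (meson half_gt_zero)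
  show "\<exists>d>0. \<forall>s\<in>S. dist s s\<^sub>0 < d \<longrightarrow> dist (SUP a\<in>K. g s a) (SUP a\<in>K. g s\<^sub>0 a) < e"
  proof (intro exI[of _ "min 1 d"] conjI ballI impI)
    fix s assume s: "s \<in> S" "dist s s\<^sub>0 < min 1 d"
    have "\<bar>g s a - g s\<^sub>0 a\<bar> \<le> e/2" if "a \<in> K" for a
    proof -
      have "(s,a) \<in> ?C" "(s\<^sub>0,a) \<in> ?C" "dist (s,a) (s\<^sub>0,a) < d"
        using s s\<^sub>0 that by (auto simp: dist_commute dist_Pair_Pair)
      then show ?thesis
        using d[of "(s\<^sub>0,a)" "(s,a)"] by (simp add: dist_real_def)
    qed
    then have "\<bar>(SUP a\<in>K. g s a) - (SUP a\<in>K. g s\<^sub>0 a)\<bar> \<le> e/2"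
      by (intro cSUP_abs_diff_le assms bdd s s\<^sub>0)
    then show "dist (SUP a\<in>K. g s a) (SUP a\<in>K. g s\<^sub>0 a) < e"
      using \<open>0 < e\<close> by (simp add: dist_real_def)
  qed (use \<open>d > 0\<close> in simp)
qed

definition affine_sup :: "('c \<Rightarrow> 'a::real_inner) \<Rightarrow> ('c \<Rightarrow> real) \<Rightarrow> 'c set \<Rightarrow> 'a \<Rightarrow> real" where
  "affine_sup g h K p = (SUP a\<in>K. inner p (g a) - h a)"

definition affine_sup_bound :: "('c \<Rightarrow> 'a::real_normed_vector) \<Rightarrow> ('c \<Rightarrow> real) \<Rightarrow> 'c set \<Rightarrow> real" where
  "affine_sup_bound g h K = (SUP a\<in>K. norm (g a) + \<bar>h a\<bar>)"

definition legendre_conjugate :: "('a::real_inner \<Rightarrow> real) \<Rightarrow> 'a \<Rightarrow> ereal" where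
  "legendre_conjugate \<phi> v = (SUP p. ereal (inner v p - \<phi> p))"

lemma legendre_conjugate_ge: "ereal (inner v p - \<phi> p) \<le> legendre_conjugate \<phi> v"
  unfolding legendre_conjugate_def by (rule SUP_upper) simp

context
  fixes g :: "'c::topological_space \<Rightarrow> 'a::euclidean_space" and h :: "'c \<Rightarrow> real" and K :: "'c set"
  assumes K: "compact K" "K \<noteq> {}"
    and g: "continuous_on K g" and h: "continuous_on K h"
begin

lemma bdd_above_affine_image: "bdd_above ((\<lambda>a. inner p (g a) - h a) ` K)"
  using K g h
  by (intro bounded_imp_bdd_above compact_imp_bounded compact_continuous_image continuous_intros)

lemma bdd_above_norm_abs_image: "bdd_above ((\<lambda>a. norm (g a) + \<bar>h a\<bar>) ` K)"
  using K g h
  by (intro bounded_imp_bdd_above compact_imp_bounded compact_continuous_image continuous_intros)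

lemma affine_le_affine_sup: "a \<in> K \<Longrightarrow> inner p (g a) - h a \<le> affine_sup g h K p"
  unfolding affine_sup_def by (rule cSUP_upper[OF _ bdd_above_affine_image])

lemma affine_sup_least: "(\<And>a. a \<in> K \<Longrightarrow> inner p (g a) - h a \<le> c) \<Longrightarrow> affine_sup g h K p \<le> c"
  unfolding affine_sup_def by (rule cSUP_least[OF K(2)])

lemma norm_abs_le_affine_sup_bound: "a \<in> K \<Longrightarrow> norm (g a) + \<bar>h a\<bar> \<le> affine_sup_bound g h K"
  unfolding affine_sup_bound_def by (rule cSUP_upper[OF _ bdd_above_norm_abs_image])

lemma norm_le_affine_sup_bound: "a \<in> K \<Longrightarrow> norm (g a) \<le> affine_sup_bound g h K"
  and abs_le_affine_sup_bound: "a \<in> K \<Longrightarrow> \<bar>h a\<bar> \<le> affine_sup_bound g h K"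
  using norm_abs_le_affine_sup_bound by (smt (verit) norm_ge_zero)+

lemma affine_sup_bound_nonneg: "0 \<le> affine_sup_bound g h K"
  using K(2) abs_le_affine_sup_bound by force

lemma convex_on_affine_sup: "convex_on UNIV (affine_sup g h K)"
proof (rule convex_onI)
  fix u :: real and p q :: 'a assume u: "0 < u" "u < 1"
  show "affine_sup g h K ((1 - u) *\<^sub>R p + u *\<^sub>R q) \<le> (1 - u) * affine_sup g h K p + u * affine_sup g h K q"
  proof (rule affine_sup_least)
    fix a assume "a \<in> K"
    have "inner ((1 - u) *\<^sub>R p + u *\<^sub>R q) (g a) - h a
        = (1 - u) * (inner p (g a) - h a) + u * (inner q (g a) - h a)"
      by (simp add: inner_add_left algebra_simps)
    also have "\<dots> \<le> (1 - u) * affine_sup g h K p + u * affine_sup g h K q"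
      using affine_le_affine_sup[OF \<open>a \<in> K\<close>] u by (intro add_mono mult_left_mono) auto
    finally show "inner ((1 - u) *\<^sub>R p + u *\<^sub>R q) (g a) - h a \<le> \<dots>" .
  qed
qed simp

lemma affine_sup_lipschitz:
  "\<bar>affine_sup g h K p - affine_sup g h K q\<bar> \<le> affine_sup_bound g h K * norm (p - q)"
  unfolding affine_sup_def
proof (rule cSUP_abs_diff_le[OF K(2) bdd_above_affine_image bdd_above_affine_image])
  fix a assume "a \<in> K"
  have "\<bar>inner p (g a) - h a - (inner q (g a) - h a)\<bar> = \<bar>inner (p - q) (g a)\<bar>"
    by (simp add: inner_diff_left)
  also have "\<dots> \<le> norm (p - q) * norm (g a)" by (rule Cauchy_Schwarz_ineq2)
  also have "\<dots> \<le> norm (p - q) * affine_sup_bound g h K"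
    using norm_le_affine_sup_bound[OF \<open>a \<in> K\<close>] by (simp add: mult_left_mono)
  finally show "\<bar>inner p (g a) - h a - (inner q (g a) - h a)\<bar> \<le> affine_sup_bound g h K * norm (p - q)"
    by (simp add: mult.commute)
qed

lemma convex_hull_subset_cball: "convex hull (g ` K) \<subseteq> cball 0 (affine_sup_bound g h K)"
  by (rule hull_minimal) (auto simp: norm_le_affine_sup_bound)

text \<open>If \<open>v\<close> lies outside the compact convex set \<open>convex hull (g ` K)\<close>, a separating
  direction \<open>a\<close> makes \<open>inner v p - affine_sup g h K p\<close> unbounded along \<open>p = - s *\<^sub>R a\<close>.\<close>

lemma in_convex_hull_if_legendre_conjugate_finite:
  assumes "legendre_conjugate (affine_sup g h K) v \<noteq> \<infinity>"
  shows "v \<in> convex hull (g ` K)"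
proof (rule ccontr)
  let ?M = "affine_sup_bound g h K"
  assume "v \<notin> convex hull (g ` K)"
  moreover have "compact (convex hull (g ` K))"
    using K g by (intro compact_convex_hull compact_continuous_image)
  ultimately obtain a b where ab: "inner a v < b" "\<And>w. w \<in> convex hull (g ` K) \<Longrightarrow> b < inner a w"
    using separating_hyperplane_closed_point[OF convex_convex_hull compact_imp_closed] by metis
  obtain r where r: "legendre_conjugate (affine_sup g h K) v \<le> ereal r"
    using assms by (cases "legendre_conjugate (affine_sup g h K) v") auto
  define s where "s = (\<bar>r\<bar> + ?M + 1) / (b - inner a v)"
  have "s > 0"
    using ab(1) affine_sup_bound_nonneg by (simp add: s_def)
  have "s * (b - inner a v) = \<bar>r\<bar> + ?M + 1"
    using ab(1) by (simp add: s_def)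
  then have s: "s * b - s * inner a v = \<bar>r\<bar> + ?M + 1"
    by (simp add: right_diff_distrib)
  have "ereal (inner v (- s *\<^sub>R a) - affine_sup g h K (- s *\<^sub>R a)) \<le> ereal r"
    using legendre_conjugate_ge r by (rule order_trans)
  then have "inner v (- s *\<^sub>R a) - affine_sup g h K (- s *\<^sub>R a) \<le> r"
    by (simp only: ereal_less_eq(3))
  moreover have "inner v (- s *\<^sub>R a) = - s * inner a v"
    by (simp add: inner_commute)
  moreover have "affine_sup g h K (- s *\<^sub>R a) \<le> - s * b + ?M"
  proof (rule affine_sup_least)
    fix a' assume "a' \<in> K"
    then have "b < inner a (g a')" by (intro ab(2) hull_inc) simp
    with \<open>s > 0\<close> abs_le_affine_sup_bound[OF \<open>a' \<in> K\<close>]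
    show "inner (- s *\<^sub>R a) (g a') - h a' \<le> - s * b + ?M"
      by (simp add: abs_le_iff) (smt (verit) mult_strict_left_mono)
  qed
  ultimately show False
    using s by linarith
qed

lemma legendre_conjugate_affine_sup_ge:
  "ereal (- affine_sup_bound g h K) \<le> legendre_conjugate (affine_sup g h K) v"
proof -
  have "affine_sup g h K 0 \<le> affine_sup_bound g h K"
    by (rule affine_sup_least) (use abs_le_affine_sup_bound in force)
  then have "ereal (- affine_sup_bound g h K) \<le> ereal (inner v 0 - affine_sup g h K 0)"
    by simp
  then show ?thesis
    using legendre_conjugate_ge by (rule order_trans)
qed

lemma legendre_conjugate_affine_sup_le:
  assumes "v \<in> convex hull (g ` K)"
  shows "legendre_conjugate (affine_sup g h K) v \<le> ereal (affine_sup_bound g h K)"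
  unfolding legendre_conjugate_def
proof (rule SUP_least)
  fix p
  have "g ` K \<subseteq> {w. inner p w \<le> affine_sup g h K p + affine_sup_bound g h K}"
  proof
    fix w assume "w \<in> g ` K"
    then obtain a where "a \<in> K" "w = g a" by blast
    with affine_le_affine_sup[of a p] abs_le_affine_sup_bound[of a]
    show "w \<in> {w. inner p w \<le> affine_sup g h K p + affine_sup_bound g h K}" by auto
  qed
  then have "convex hull (g ` K) \<subseteq> {w. inner p w \<le> affine_sup g h K p + affine_sup_bound g h K}"
    by (intro hull_minimal convex_halfspace_le)
  with assms show "ereal (inner v p - affine_sup g h K p) \<le> ereal (affine_sup_bound g h K)"
    by (auto simp: inner_commute)
qed

end

lemma affine_sup_diff_le:
  fixes g\<^sub>1 g\<^sub>2 :: "'c::topological_space \<Rightarrow> 'a::euclidean_space"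
  assumes K: "compact K" "K \<noteq> {}"
    and cont: "continuous_on K g\<^sub>1" "continuous_on K h\<^sub>1" "continuous_on K g\<^sub>2" "continuous_on K h\<^sub>2"
    and close: "\<And>a. a \<in> K \<Longrightarrow> norm (g\<^sub>1 a - g\<^sub>2 a) + \<bar>h\<^sub>1 a - h\<^sub>2 a\<bar> \<le> e"
  shows "\<bar>affine_sup g\<^sub>1 h\<^sub>1 K p - affine_sup g\<^sub>2 h\<^sub>2 K p\<bar> \<le> (1 + norm p) * e"
  unfolding affine_sup_def
proof (rule cSUP_abs_diff_le[OF K(2) bdd_above_affine_image bdd_above_affine_image])
  fix a assume "a \<in> K"
  have "\<bar>inner p (g\<^sub>1 a) - h\<^sub>1 a - (inner p (g\<^sub>2 a) - h\<^sub>2 a)\<bar>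
      \<le> \<bar>inner p (g\<^sub>1 a - g\<^sub>2 a)\<bar> + \<bar>h\<^sub>1 a - h\<^sub>2 a\<bar>"
    by (simp add: inner_diff_right)
  also have "\<dots> \<le> norm p * norm (g\<^sub>1 a - g\<^sub>2 a) + \<bar>h\<^sub>1 a - h\<^sub>2 a\<bar>"
    using Cauchy_Schwarz_ineq2 by (rule add_right_mono)
  also have "\<dots> \<le> (1 + norm p) * (norm (g\<^sub>1 a - g\<^sub>2 a) + \<bar>h\<^sub>1 a - h\<^sub>2 a\<bar>)"
    by (simp add: algebra_simps)
  also have "\<dots> \<le> (1 + norm p) * e"
    using close[OF \<open>a \<in> K\<close>] by (intro mult_left_mono) auto
  finally show "\<bar>inner p (g\<^sub>1 a) - h\<^sub>1 a - (inner p (g\<^sub>2 a) - h\<^sub>2 a)\<bar> \<le> (1 + norm p) * e" .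
qed (use K cont in auto)

lemma affine_sup_bound_diff_le:
  fixes g\<^sub>1 g\<^sub>2 :: "'c::topological_space \<Rightarrow> 'a::euclidean_space"
  assumes K: "compact K" "K \<noteq> {}"
    and cont: "continuous_on K g\<^sub>1" "continuous_on K h\<^sub>1" "continuous_on K g\<^sub>2" "continuous_on K h\<^sub>2"
    and close: "\<And>a. a \<in> K \<Longrightarrow> norm (g\<^sub>1 a - g\<^sub>2 a) + \<bar>h\<^sub>1 a - h\<^sub>2 a\<bar> \<le> e"
  shows "\<bar>affine_sup_bound g\<^sub>1 h\<^sub>1 K - affine_sup_bound g\<^sub>2 h\<^sub>2 K\<bar> \<le> e"
  unfolding affine_sup_bound_def
proof (rule cSUP_abs_diff_le[OF K(2) bdd_above_norm_abs_image bdd_above_norm_abs_image])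
  fix a assume "a \<in> K"
  have "\<bar>norm (g\<^sub>1 a) - norm (g\<^sub>2 a)\<bar> \<le> norm (g\<^sub>1 a - g\<^sub>2 a)"
    by (rule norm_triangle_ineq3)
  with close[OF \<open>a \<in> K\<close>]
  show "\<bar>norm (g\<^sub>1 a) + \<bar>h\<^sub>1 a\<bar> - (norm (g\<^sub>2 a) + \<bar>h\<^sub>2 a\<bar>)\<bar> \<le> e" by linarith
qed (use K cont in auto)

lemma continuous_on_affine_sup:
  fixes g :: "'s::heine_borel \<Rightarrow> 'c::metric_space \<Rightarrow> 'a::euclidean_space"
  assumes "closed S" "compact K" "K \<noteq> {}"
    and "continuous_on (S \<times> K) (\<lambda>(s,a). g s a)" "continuous_on (S \<times> K) (\<lambda>(s,a). h s a)"
  shows "continuous_on (S \<times> UNIV) (\<lambda>(s,p). affine_sup (g s) (h s) K p)"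
proof -
  have "continuous_on ((S \<times> UNIV) \<times> K) (\<lambda>z. (\<lambda>(s,a). g s a) (fst (fst z), snd z))"
    by (rule continuous_on_compose2[OF assms(4)]) (auto intro!: continuous_intros)
  moreover have "continuous_on ((S \<times> UNIV) \<times> K) (\<lambda>z. (\<lambda>(s,a). h s a) (fst (fst z), snd z))"
    by (rule continuous_on_compose2[OF assms(5)]) (auto intro!: continuous_intros)
  ultimately have "continuous_on ((S \<times> UNIV) \<times> K) (\<lambda>((s,p),a). inner p (g s a) - h s a)"
    unfolding case_prod_beta by (intro continuous_intros) auto
  then have "continuous_on (S \<times> UNIV) (\<lambda>s. SUP a\<in>K. inner (snd s) (g (fst s) a) - h (fst s) a)"
    using assms(1-3) by (intro continuous_on_SUP_compact closed_Times) (auto simp: case_prod_beta)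
  then show ?thesis
    by (simp add: affine_sup_def case_prod_beta)
qed

lemma continuous_on_affine_sup_bound:
  fixes g :: "'s::heine_borel \<Rightarrow> 'c::metric_space \<Rightarrow> 'a::euclidean_space"
  assumes "closed S" "compact K" "K \<noteq> {}"
    and "continuous_on (S \<times> K) (\<lambda>(s,a). g s a)" "continuous_on (S \<times> K) (\<lambda>(s,a). h s a)"
  shows "continuous_on S (\<lambda>s. affine_sup_bound (g s) (h s) K)"
  using assms unfolding affine_sup_bound_def
  by (intro continuous_on_SUP_compact) (auto simp: case_prod_beta intro!: continuous_intros)

lemma AE_lebesgue_on_mem: "AE t in lebesgue_on S. t \<in> S"
  by (rule AE_I2) simp

locale control_hamiltonian =
  fixes T :: real
    and H :: "real \<Rightarrow> 'a::euclidean_space \<Rightarrow> 'a \<Rightarrow> real"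
    and f :: "real \<Rightarrow> 'a \<Rightarrow> 'a \<times> real \<Rightarrow> 'a"
    and l :: "real \<Rightarrow> 'a \<Rightarrow> 'a \<times> real \<Rightarrow> real"
  assumes rep: "\<forall>t\<in>{0..T}. \<forall>x p. H t x p = (SUP a\<in>cball 0 1. inner p (f t x a) - l t x a)"
    and R1f: "continuous_on ({0..T} \<times> UNIV \<times> cball 0 1) (\<lambda>(t,x,a). f t x a)"
    and R1l: "continuous_on ({0..T} \<times> UNIV \<times> cball 0 1) (\<lambda>(t,x,a). l t x a)"
    and R2: "\<forall>R\<ge>0. \<exists>K. (\<forall>t\<in>{0..T}. 0 \<le> K t) \<and> integrable (lebesgue_on {0..T}) K \<and>
              (AE t in lebesgue_on {0..T}. \<forall>x\<in>cball 0 R. \<forall>y\<in>cball 0 R. \<forall>a\<in>cball 0 1.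
                 norm (f t x a - f t y a) + \<bar>l t x a - l t y a\<bar> \<le> K t * norm (x - y))"
    and R3: "\<exists>C. (\<forall>t\<in>{0..T}. 0 \<le> C t) \<and> integrable (lebesgue_on {0..T}) C \<and>
              (AE t in lebesgue_on {0..T}. \<forall>x. \<forall>a\<in>cball 0 1.
                 norm (f t x a) + \<bar>l t x a\<bar> \<le> C t * (1 + norm x))"
begin

definition lam :: "real \<Rightarrow> 'a \<Rightarrow> real" where
  "lam t x = affine_sup_bound (f t x) (l t x) (cball 0 1)"

lemma H_eq_affine_sup: "t \<in> {0..T} \<Longrightarrow> H t x = affine_sup (f t x) (l t x) (cball 0 1)"
  using rep by (auto simp: affine_sup_def)

lemma Hstar_eq_legendre_conjugate:
  "t \<in> {0..T} \<Longrightarrow> Hstar H t x = legendre_conjugate (affine_sup (f t x) (l t x) (cball 0 1))"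
  by (auto simp: Hstar_def legendre_conjugate_def H_eq_affine_sup)

lemma continuous_on_f_l:
  assumes "t \<in> {0..T}"
  shows "continuous_on (cball 0 1) (f t x)" "continuous_on (cball 0 1) (l t x)"
proof -
  have "continuous_on (cball 0 1) (\<lambda>a. (\<lambda>(t,x,a). f t x a) (t,x,a))"
    "continuous_on (cball 0 1) (\<lambda>a. (\<lambda>(t,x,a). l t x a) (t,x,a))"
    by (rule continuous_on_compose2[OF R1f] continuous_on_compose2[OF R1l];
        use assms in \<open>auto intro!: continuous_intros\<close>)+
  then show "continuous_on (cball 0 1) (f t x)" "continuous_on (cball 0 1) (l t x)"
    by simp_all
qed

lemma continuous_on_f_l_uncurried:
  "continuous_on (({0..T} \<times> UNIV) \<times> cball 0 1) (\<lambda>(s,a). f (fst s) (snd s) a)"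
  "continuous_on (({0..T} \<times> UNIV) \<times> cball 0 1) (\<lambda>(s,a). l (fst s) (snd s) a)"
proof -
  have "continuous_on (({0..T} \<times> UNIV) \<times> cball 0 1)
      (\<lambda>z. (\<lambda>(t,x,a). f t x a) (fst (fst z), snd (fst z), snd z))"
    "continuous_on (({0..T} \<times> UNIV) \<times> cball 0 1)
      (\<lambda>z. (\<lambda>(t,x,a). l t x a) (fst (fst z), snd (fst z), snd z))"
    by (rule continuous_on_compose2[OF R1f] continuous_on_compose2[OF R1l];
        auto intro!: continuous_intros)+
  then show "continuous_on (({0..T} \<times> UNIV) \<times> cball 0 1) (\<lambda>(s,a). f (fst s) (snd s) a)"
    "continuous_on (({0..T} \<times> UNIV) \<times> cball 0 1) (\<lambda>(s,a). l (fst s) (snd s) a)"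
    by (simp_all add: case_prod_beta)
qed

lemma continuous_on_lam: "continuous_on ({0..T} \<times> UNIV) (\<lambda>(t,x). lam t x)"
  using continuous_on_affine_sup_bound[OF _ _ _ continuous_on_f_l_uncurried]
  by (simp add: lam_def case_prod_beta closed_Times)

lemma lam_nonneg: "t \<in> {0..T} \<Longrightarrow> 0 \<le> lam t x"
  unfolding lam_def by (rule affine_sup_bound_nonneg) (auto simp: continuous_on_f_l)

lemma H1: "H1 T H"
proof -
  have "continuous_on (({0..T} \<times> UNIV) \<times> UNIV)
      (\<lambda>(s,p). affine_sup (f (fst s) (snd s)) (l (fst s) (snd s)) (cball 0 1) p)"
    using continuous_on_affine_sup[OF _ _ _ continuous_on_f_l_uncurried] by (simp add: closed_Times)
  then have "continuous_on ({0..T} \<times> UNIV \<times> UNIV) (\<lambda>z. (\<lambda>(s,p).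
      affine_sup (f (fst s) (snd s)) (l (fst s) (snd s)) (cball 0 1) p) ((fst z, fst (snd z)), snd (snd z)))"
    by (rule continuous_on_compose2) (auto intro!: continuous_intros)
  then show ?thesis
    unfolding H1_def by (rule continuous_on_eq) (auto simp: H_eq_affine_sup)
qed

lemma H2: "H2 T H"
  unfolding H2_def
  by (auto simp: H_eq_affine_sup continuous_on_f_l intro!: convex_on_affine_sup)

lemma H_lipschitz: "t \<in> {0..T} \<Longrightarrow> \<bar>H t x p - H t x q\<bar> \<le> lam t x * norm (p - q)"
  unfolding lam_def H_eq_affine_sup by (rule affine_sup_lipschitz) (auto simp: continuous_on_f_l)

lemma H3: "H3 T H"
  unfolding H3_def
proof (intro allI impI)
  fix R :: real
  have "compact ((\<lambda>(t,x). lam t x) ` ({0..T} \<times> cball 0 R))"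
    by (rule compact_continuous_image[OF continuous_on_subset[OF continuous_on_lam]])
      (auto intro: compact_Times)
  then obtain M where M: "\<forall>z \<in> (\<lambda>(t,x). lam t x) ` ({0..T} \<times> cball 0 R). norm z \<le> M" "M > 0"
    by (meson compact_imp_bounded bounded_pos)
  have "\<bar>H t x p - H t x q\<bar> \<le> M * norm (p - q)" if "t \<in> {0..T}" "x \<in> cball 0 R" for t x p q
  proof -
    have "lam t x \<le> M" using M(1) that by force
    then show ?thesis
      using H_lipschitz[OF that(1)] by (meson mult_right_mono norm_ge_zero order_trans)
  qed
  then show "\<exists>C\<ge>0. \<forall>t\<in>{0..T}. \<forall>x\<in>cball 0 R. \<forall>p q. \<bar>H t x p - H t x q\<bar> \<le> C * norm (p - q)"
    using \<open>M > 0\<close> by (intro exI[of _ M]) auto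
qed

lemma lam_linear_growth:
  "\<exists>\<theta>. integrable_nonneg T \<theta> \<and> (AE t in lebesgue_on {0..T}. \<forall>x. lam t x \<le> \<theta> t * (1 + norm x))"
proof -
  obtain C where "integrable_nonneg T C"
    and C: "AE t in lebesgue_on {0..T}. \<forall>x. \<forall>a\<in>cball 0 1. norm (f t x a) + \<bar>l t x a\<bar> \<le> C t * (1 + norm x)"
    using R3 by (auto simp: integrable_nonneg_def)
  moreover have "AE t in lebesgue_on {0..T}. \<forall>x. lam t x \<le> C t * (1 + norm x)"
    using C by eventually_elim (auto simp: lam_def affine_sup_bound_def intro!: cSUP_least)
  ultimately show ?thesis by blast
qed

lemma H4: "H4 T H"
proof -
  obtain \<theta> where "integrable_nonneg T \<theta>"
    and \<theta>: "AE t in lebesgue_on {0..T}. \<forall>x. lam t x \<le> \<theta> t * (1 + norm x)"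
    using lam_linear_growth by blast
  moreover have "AE t in lebesgue_on {0..T}. \<forall>x p q. \<bar>H t x p - H t x q\<bar> \<le> \<theta> t * (1 + norm x) * norm (p - q)"
    using AE_lebesgue_on_mem \<theta>
  proof eventually_elim
    case (elim t)
    show ?case
      using H_lipschitz[OF elim(1)] elim(2) by (meson mult_right_mono norm_ge_zero order_trans)
  qed
  ultimately show ?thesis
    unfolding H4_def by blast
qed

lemma lipschitz_modulus_f_l:
  assumes "R \<ge> 0"
  obtains K where "integrable_nonneg T K"
    and "AE t in lebesgue_on {0..T}. t \<in> {0..T} \<and> (\<forall>x\<in>cball 0 R. \<forall>y\<in>cball 0 R. \<forall>a\<in>cball 0 1.
       norm (f t x a - f t y a) + \<bar>l t x a - l t y a\<bar> \<le> K t * norm (x - y))"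
proof -
  obtain K where "integrable_nonneg T K"
    and "AE t in lebesgue_on {0..T}. \<forall>x\<in>cball 0 R. \<forall>y\<in>cball 0 R. \<forall>a\<in>cball 0 1.
       norm (f t x a - f t y a) + \<bar>l t x a - l t y a\<bar> \<le> K t * norm (x - y)"
    using R2 assms by (auto simp: integrable_nonneg_def)
  with AE_lebesgue_on_mem[of "{0..T}"] show thesis
    by (intro that) (auto elim: AE_mp)
qed

lemma H5: "H5 T H"
  unfolding H5_def
proof (intro allI impI)
  fix R :: real assume "0 \<le> R"
  then obtain K where "integrable_nonneg T K"
    and K: "AE t in lebesgue_on {0..T}. t \<in> {0..T} \<and> (\<forall>x\<in>cball 0 R. \<forall>y\<in>cball 0 R. \<forall>a\<in>cball 0 1.
       norm (f t x a - f t y a) + \<bar>l t x a - l t y a\<bar> \<le> K t * norm (x - y))"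
    by (rule lipschitz_modulus_f_l)
  moreover have "AE t in lebesgue_on {0..T}. \<forall>x\<in>cball 0 R. \<forall>y\<in>cball 0 R. \<forall>p.
      \<bar>H t x p - H t y p\<bar> \<le> K t * (1 + norm p) * norm (x - y)"
    using K
  proof eventually_elim
    case (elim t)
    then have "\<bar>H t x p - H t y p\<bar> \<le> (1 + norm p) * (K t * norm (x - y))"
      if "x \<in> cball 0 R" "y \<in> cball 0 R" for x y p
      using that unfolding H_eq_affine_sup[OF elim[THEN conjunct1]]
      by (intro affine_sup_diff_le) (auto simp: continuous_on_f_l)
    then show ?case by (simp add: mult_ac)
  qed
  ultimately show "\<exists>k. integrable_nonneg T k \<and> (AE t in lebesgue_on {0..T}. \<forall>x\<in>cball 0 R. \<forall>y\<in>cball 0 R. \<forall>p.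
      \<bar>H t x p - H t y p\<bar> \<le> k t * (1 + norm p) * norm (x - y))"
    by blast
qed

lemma lam_lipschitz:
  assumes "R \<ge> 0"
  shows "\<exists>\<zeta>. integrable_nonneg T \<zeta> \<and> (AE t in lebesgue_on {0..T}. lipschitz_on (\<zeta> t) (cball 0 R) (lam t))"
proof -
  obtain K where K_nonneg: "integrable_nonneg T K"
    and K: "AE t in lebesgue_on {0..T}. t \<in> {0..T} \<and> (\<forall>x\<in>cball 0 R. \<forall>y\<in>cball 0 R. \<forall>a\<in>cball 0 1.
       norm (f t x a - f t y a) + \<bar>l t x a - l t y a\<bar> \<le> K t * norm (x - y))"
    using assms by (rule lipschitz_modulus_f_l)
  have "AE t in lebesgue_on {0..T}. lipschitz_on (K t) (cball 0 R) (lam t)"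
    using K
  proof eventually_elim
    case (elim t)
    then have "\<bar>lam t x - lam t y\<bar> \<le> K t * norm (x - y)" if "x \<in> cball 0 R" "y \<in> cball 0 R" for x y
      using that unfolding lam_def by (intro affine_sup_bound_diff_le) (auto simp: continuous_on_f_l)
    with elim K_nonneg show ?case
      by (auto simp: lipschitz_on_def integrable_nonneg_def dist_real_def dist_norm)
  qed
  with K_nonneg show ?thesis by blast
qed

lemma domHstar_subset_convex_hull:
  assumes "t \<in> {0..T}"
  shows "domHstar H t x \<subseteq> convex hull (f t x ` cball 0 1)"
proof
  fix v assume "v \<in> domHstar H t x"
  then have "legendre_conjugate (affine_sup (f t x) (l t x) (cball 0 1)) v \<noteq> \<infinity>"
    using assms by (simp add: domHstar_def Hstar_eq_legendre_conjugate)
  then show "v \<in> convex hull (f t x ` cball 0 1)"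
    by (simp add: in_convex_hull_if_legendre_conjugate_finite[OF _ _ continuous_on_f_l[OF assms]])
qed

lemma setnorm_domHstar_le:
  assumes "t \<in> {0..T}"
  shows "setnorm (domHstar H t x) \<le> ereal (lam t x)"
proof -
  have "domHstar H t x \<subseteq> cball 0 (lam t x)"
    using domHstar_subset_convex_hull[OF assms]
      convex_hull_subset_cball[OF _ _ continuous_on_f_l[OF assms]]
    unfolding lam_def by force
  then show ?thesis
    unfolding setnorm_def by (intro SUP_least) auto
qed

lemma ereal_setnorm_Hstar_le:
  assumes "t \<in> {0..T}"
  shows "ereal_setnorm (Hstar H t x ` domHstar H t x) \<le> ereal (lam t x)"
  unfolding ereal_setnorm_def
proof (intro SUP_least, clarify)
  fix v assume "v \<in> domHstar H t x"
  let ?c = "legendre_conjugate (affine_sup (f t x) (l t x) (cball 0 1)) v"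
  have "?c \<le> ereal (lam t x)"
    unfolding lam_def using domHstar_subset_convex_hull[OF assms] \<open>v \<in> domHstar H t x\<close>
    by (intro legendre_conjugate_affine_sup_le[OF _ _ continuous_on_f_l[OF assms]]) auto
  moreover have "ereal (- lam t x) \<le> ?c"
    unfolding lam_def by (rule legendre_conjugate_affine_sup_ge[OF _ _ continuous_on_f_l[OF assms]]) simp_all
  ultimately show "\<bar>Hstar H t x v\<bar> \<le> ereal (lam t x)"
    by (cases ?c) (auto simp: Hstar_eq_legendre_conjugate[OF assms])
qed

end

theorem theorem3p2:
  fixes T :: real
    and H :: "real \<Rightarrow> 'a::euclidean_space \<Rightarrow> 'a \<Rightarrow> real"
    and f :: "real \<Rightarrow> 'a \<Rightarrow> 'a \<times> real \<Rightarrow> 'a"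
    and l :: "real \<Rightarrow> 'a \<Rightarrow> 'a \<times> real \<Rightarrow> real"
  assumes rep: "\<forall>t\<in>{0..T}. \<forall>x p. H t x p = (SUP a\<in>cball 0 1. inner p (f t x a) - l t x a)"
    and R1f: "continuous_on ({0..T} \<times> UNIV \<times> cball 0 1) (\<lambda>(t,x,a). f t x a)"
    and R1l: "continuous_on ({0..T} \<times> UNIV \<times> cball 0 1) (\<lambda>(t,x,a). l t x a)"
    and R2: "\<forall>R\<ge>0. \<exists>K. (\<forall>t\<in>{0..T}. 0 \<le> K t) \<and> integrable (lebesgue_on {0..T}) K \<and>
              (AE t in lebesgue_on {0..T}. \<forall>x\<in>cball 0 R. \<forall>y\<in>cball 0 R. \<forall>a\<in>cball 0 1.
                 norm (f t x a - f t y a) + \<bar>l t x a - l t y a\<bar> \<le> K t * norm (x - y))"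
    and R3: "\<exists>C. (\<forall>t\<in>{0..T}. 0 \<le> C t) \<and> integrable (lebesgue_on {0..T}) C \<and>
              (AE t in lebesgue_on {0..T}. \<forall>x. \<forall>a\<in>cball 0 1.
                 norm (f t x a) + \<bar>l t x a\<bar> \<le> C t * (1 + norm x))"
  shows "condition_A T H"
proof -
  interpret control_hamiltonian T H f l
    using assms by unfold_locales
  show ?thesis
    unfolding condition_A_def
    using H1 H2 H3 H4 H5 continuous_on_lam lam_nonneg setnorm_domHstar_le ereal_setnorm_Hstar_le
      lam_lipschitz lam_linear_growth
    by blast
qed

end
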